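(* Let $f(x,\theta)$ be a model, differentiable in its parameters $\theta\in\mathbb{R}^d$, let $\mathcal{L}(\hat y,y)$ be a loss function, and let $\kappa>0$. Let $\operatorname{Clip}_\kappa:\mathbb{R}^d\to\mathbb{R}^d$ clamp each entry of its input to $[-\kappa,\kappa]$ (leaving entries in that range unchanged). Let $\boldsymbol{\theta^{(t-1)}}=[\theta^L,\theta^U]\subseteq\mathbb{R}^d$ be an interval parameter domain, let $\mathcal{B}^{(t)}=\{(x^{(i)},y^{(i)})\}_{i=1}^b$ be a nominal batch of size $b$, and let $n$ be an integer with $0\le n\le b$. For each $i$, let $\delta_L^{(t,i)},\delta_U^{(t,i)}\in\mathbb{R}^d$ satisfy, element-wise, $$\delta_L^{(t,i)}\le \operatorname{Clip}_\kappa\Big[\nabla_\theta\mathcal{L}\big(f(x^{(i)},\theta'),y^{(i)}\big)\Big]\le\delta_U^{(t,i)}\quad\text{for all }\theta'\in\boldsymbol{\theta^{(t-1)}}.$$ Then for every $\theta^{(t-1)}\in\boldsymbol{\theta^{(t-1)}}$ and every perturbed batch $\tilde{\mathcal{B}}^{(t)}$ obtained from $\mathcal{B}^{(t)}$ by removing up to $n$ data points and adding up to $n$ arbitrary data points, the clipped descent direction $$\Delta\theta^{(t)}=\frac{1}{|\tilde{\mathcal{B}}^{(t)}|}\sum_{(x,y)\in\tilde{\mathcal{B}}^{(t)}}\operatorname{Clip}_\kappa\Big[\nabla_\theta\mathcal{L}\big(f(x,\theta^{(t-1)}),y\big)\Big]$$ satisfies, element-wise, $\Delta\theta_L^{(t)}\le\Delta\theta^{(t)}\le\Delta\theta_U^{(t)}$,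 where $$\Delta\theta_L^{(t)}=\frac1b\Big(\operatorname{SEMin}_{b-n}\{\delta_L^{(t,i)}\}_{i=1}^b-n\kappa\mathbf{1}\Big),\qquad \Delta\theta_U^{(t)}=\frac1b\Big(\operatorname{SEMax}_{b-n}\{\delta_U^{(t,i)}\}_{i=1}^b+n\kappa\mathbf{1}\Big),$$ and $\mathbf 1\in\mathbb{R}^d$ is the all-ones vector.
   Context: An interval domain $[\theta^L,\theta^U]\subseteq\mathbb{R}^d$ is the set of $\theta$ with $\theta^L_j\le\theta_j\le\theta^U_j$ for all $j$. For vectors $\{v^{(i)}\}_{i=1}^b\subseteq\mathbb{R}^d$ and an integer $a\le b$, $\operatorname{SEMax}_a\{v^{(i)}\}$ is the vector whose $j$-th entry is the sum of the $a$ largest values among $v^{(1)}_j,\dots,v^{(b)}_j$, and $\operatorname{SEMin}_a\{v^{(i)}\}$ is the vector whose $j$-th entry is the sum of the $a$ smallest values among them (computed independently at each index $j$). *)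

theory Defs
  imports "HOL-Analysis.Analysis" "HOL-Library.Multiset"
begin

definition interval_dom :: "real^'d \<Rightarrow> real^'d \<Rightarrow> (real^'d) set" where
  "interval_dom thL thU = {th. \<forall>j. thL$j \<le> th$j \<and> th$j \<le> thU$j}"

definition Clip :: "real \<Rightarrow> real^'d \<Rightarrow> real^'d" where
  "Clip k v = (\<chi> j. max (- k) (min k (v$j)))"

definition grad :: "(real^'d \<Rightarrow> real) \<Rightarrow> real^'d \<Rightarrow> real^'d" where
  "grad h th = (\<chi> j. frechet_derivative h (at th) (axis j 1))"

definition SEMax :: "nat \<Rightarrow> nat \<Rightarrow> (nat \<Rightarrow> real^'d) \<Rightarrow> real^'d" where
  "SEMax a b v = (\<chi> j. sum_list (take a (rev (sort (map (\<lambda>i. v i $ j) [0..<b])))))"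

definition SEMin :: "nat \<Rightarrow> nat \<Rightarrow> (nat \<Rightarrow> real^'d) \<Rightarrow> real^'d" where
  "SEMin a b v = (\<chi> j. sum_list (take a (sort (map (\<lambda>i. v i $ j) [0..<b]))))"

end

theory Submission
  imports Defs "HOL-Combinatorics.List_Permutation"
begin

(* Fix a coordinate and let g be the clipped gradient component, so |g| \<le> \<kappa>.  Among the
   b - r points that survive the removal of r \<le> n points, pick b - n whose sum S of g is
   maximal; then S \<le> SEMax_{b-n} \<delta>U.  Each of the n - r other survivors lies below the mean
   S/(b - n) of the chosen ones and below \<kappa>, so b g \<le> S + n \<kappa> for it, and each of the a \<le> n
   added points has g \<le> \<kappa>.  Since also S \<le> (b - n) \<kappa>, moving weight from S to \<kappa> only raises
   the bound, so the mean over the perturbed batch is at most (S + n \<kappa>)/b.  The lower bound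
   is the same argument applied to -g. *)

lemma sum_le_sum_if_card_eq_separated:
  fixes f :: "'a \<Rightarrow> 'b::linordered_idom"
  assumes "finite A" "finite B" "card A = card B"
    and "\<And>a b. a \<in> A \<Longrightarrow> b \<in> B \<Longrightarrow> f a \<le> f b"
  shows "sum f A \<le> sum f B"
proof (cases "A = {}")
  case True
  then show ?thesis using assms(2,3) by simp
next
  case False
  define t where "t = Max (f ` A)"
  have "t \<in> f ` A" unfolding t_def using assms(1) False by (intro Max_in) auto
  then have t_le: "\<And>b. b \<in> B \<Longrightarrow> t \<le> f b" using assms(4) by auto
  have "sum f A \<le> of_nat (card A) * t"
    using assms(1) by (intro sum_bounded_above) (simp add: t_def)
  also have "\<dots> \<le> sum f B"
    using assms(3) t_le sum_bounded_below[of B t f] by simp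
  finally show ?thesis .
qed

lemma sorted_sum_prefix_le_sum:
  fixes ys :: "'a::linordered_idom list"
  assumes "sorted ys" "I \<subseteq> {..<length ys}" "card I = k"
  shows "(\<Sum>i<k. ys ! i) \<le> (\<Sum>i\<in>I. ys ! i)"
proof -
  have "finite I" using assms(2) finite_subset by blast
  have outside: "(\<Sum>i\<in>{..<k} - I. ys ! i) \<le> (\<Sum>i\<in>I - {..<k}. ys ! i)"
  proof (rule sum_le_sum_if_card_eq_separated)
    show "card ({..<k} - I) = card (I - {..<k})"
      using \<open>finite I\<close> assms(3) by (simp add: card_Diff_subset_Int Int_commute)
    show "ys ! a \<le> ys ! b" if "a \<in> {..<k} - I" "b \<in> I - {..<k}" for a b
      using that assms(1,2) by (auto intro!: sorted_nth_mono)
  qed (use \<open>finite I\<close> in auto)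
  have "(\<Sum>i<k. ys ! i) = (\<Sum>i\<in>{..<k} \<inter> I. ys ! i) + (\<Sum>i\<in>{..<k} - I. ys ! i)"
    by (rule sum.Int_Diff) simp
  moreover have "(\<Sum>i\<in>I. ys ! i) = (\<Sum>i\<in>{..<k} \<inter> I. ys ! i) + (\<Sum>i\<in>I - {..<k}. ys ! i)"
    using sum.Int_Diff[OF \<open>finite I\<close>, of _ "{..<k}"] by (simp add: Int_commute)
  ultimately show ?thesis using outside by simp
qed

lemma sorted_sum_list_take_le_sum:
  fixes xs ys :: "'a::linordered_idom list"
  assumes "sorted ys" "mset ys = mset xs" "I \<subseteq> {..<length xs}" "card I = k"
  shows "sum_list (take k ys) \<le> (\<Sum>i\<in>I. xs ! i)"
proof -
  obtain p where p: "bij_betw p {..<length xs} {..<length ys}" "\<forall>i<length xs. xs ! i = ys ! p i"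
    using permutation_Ex_bij[of xs ys] assms(2) by metis
  have inj: "inj_on p I" using p(1) assms(3) by (meson bij_betw_imp_inj_on inj_on_subset)
  have pI: "p ` I \<subseteq> {..<length ys}" using bij_betw_imp_surj_on[OF p(1)] assms(3) by blast
  have card_pI: "card (p ` I) = k" using card_image[OF inj] assms(4) by simp
  then have "k \<le> length ys" using card_mono[OF finite_lessThan pI] by simp
  then have "sum_list (take k ys) = (\<Sum>i<k. ys ! i)"
    by (simp add: sum_list_sum_nth min_absorb2 atLeast0LessThan)
  also have "\<dots> \<le> (\<Sum>i\<in>p ` I. ys ! i)"
    by (rule sorted_sum_prefix_le_sum[OF assms(1) pI card_pI])
  also have "\<dots> = (\<Sum>i\<in>I. ys ! p i)" by (simp add: sum.reindex[OF inj])
  also have "\<dots> = (\<Sum>i\<in>I. xs ! i)" using p(2) assms(3) by (intro sum.cong) auto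
  finally show ?thesis .
qed

lemma SEMin_le_sum:
  assumes "I \<subseteq> {..<b}" "card I = a"
  shows "SEMin a b v $ j \<le> (\<Sum>i\<in>I. v i $ j)"
proof -
  let ?xs = "map (\<lambda>i. v i $ j) [0..<b]"
  have "SEMin a b v $ j \<le> (\<Sum>i\<in>I. ?xs ! i)"
    unfolding SEMin_def using sorted_sum_list_take_le_sum[of "sort ?xs" ?xs I a] assms by simp
  also have "\<dots> = (\<Sum>i\<in>I. v i $ j)" using assms(1) by (intro sum.cong) auto
  finally show ?thesis .
qed

lemma sum_le_SEMax:
  assumes "I \<subseteq> {..<b}" "card I = a"
  shows "(\<Sum>i\<in>I. v i $ j) \<le> SEMax a b v $ j"
proof -
  let ?xs = "map (\<lambda>i. v i $ j) [0..<b]"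
  have neg_sum_list: "sum_list (map uminus zs) = - sum_list zs" for zs :: "real list"
    by (induction zs) auto
  have "sum_list (take a (map uminus (rev (sort ?xs)))) \<le> (\<Sum>i\<in>I. map uminus ?xs ! i)"
    by (rule sorted_sum_list_take_le_sum)
      (use assms in \<open>simp_all add: sorted_map sorted_wrt_rev multiset.map_comp\<close>)
  also have "\<dots> = - (\<Sum>i\<in>I. v i $ j)"
    using assms(1) by (simp add: sum_negf[symmetric]) (intro sum.cong; auto)
  finally show ?thesis unfolding SEMax_def by (simp add: take_map neg_sum_list)
qed

lemma subseteq_mset_as_image_nth:
  "M \<subseteq># mset xs \<Longrightarrow> \<exists>J \<subseteq> {..<length xs}. M = image_mset ((!) xs) (mset_set J)"
proof (induction xs arbitrary: M)
  case Nil
  then show ?case by auto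
next
  case (Cons x xs)
  have "M - {#x#} \<subseteq># mset xs" using Cons.prems by (simp add: subset_eq_diff_conv)
  then obtain J where J: "J \<subseteq> {..<length xs}" "M - {#x#} = image_mset ((!) xs) (mset_set J)"
    using Cons.IH by blast
  have "finite J" using J(1) finite_subset by blast
  then have shift: "image_mset ((!) (x # xs)) (mset_set (Suc ` J)) = M - {#x#}"
    using J(2) by (simp add: image_mset_mset_set[symmetric] multiset.map_comp comp_def)
  show ?case
  proof (cases "x \<in># M")
    case True
    have "image_mset ((!) (x # xs)) (mset_set (insert 0 (Suc ` J))) = add_mset x (M - {#x#})"
      using shift \<open>finite J\<close> by simp
    also have "\<dots> = M" using True by (rule insert_DiffM)
    finally show ?thesis using J(1) by (intro exI[of _ "insert 0 (Suc ` J)"]) auto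
  next
    case False
    then show ?thesis using shift J(1) by (intro exI[of _ "Suc ` J"]) auto
  qed
qed

lemma exists_subset_dominating_complement:
  fixes h :: "'a \<Rightarrow> 'b::linordered_ab_group_add"
  assumes "finite J" "k \<le> card J"
  obtains I where "I \<subseteq> J" "card I = k" "\<And>e i. e \<in> J - I \<Longrightarrow> i \<in> I \<Longrightarrow> h e \<le> h i"
proof -
  define S where "S = {I. I \<subseteq> J \<and> card I = k}"
  have "S \<subseteq> Pow J" unfolding S_def by blast
  then have "finite S" using assms(1) by (meson finite_Pow_iff finite_subset)
  moreover have "S \<noteq> {}" using obtain_subset_with_card_n[OF assms(2)] unfolding S_def by blast
  ultimately obtain I where "is_arg_min (\<lambda>I. - sum h I) (\<lambda>I. I \<in> S) I"
    using ex_is_arg_min_if_finite by blast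
  then have "I \<in> S" and I_max: "\<And>I'. I' \<in> S \<Longrightarrow> sum h I' \<le> sum h I"
    unfolding is_arg_min_def by (auto simp: not_less)
  then have IJ: "I \<subseteq> J" and card_I: "card I = k" by (auto simp: S_def)
  have "finite I" using IJ assms(1) finite_subset by blast
  show ?thesis
  proof (rule that[OF IJ card_I])
    fix e i assume e: "e \<in> J - I" and i: "i \<in> I"
    \<comment> \<open>exchanging i for e must not increase the sum\<close>
    have "0 < card I" using i \<open>finite I\<close> card_gt_0_iff by blast
    then have "card (insert e (I - {i})) = k"
      using e i \<open>finite I\<close> card_I by (simp add: card_insert_disjoint)
    then have "sum h (insert e (I - {i})) \<le> sum h I"
      using e i IJ by (intro I_max) (auto simp: S_def)
    moreover have "sum h (insert e (I - {i})) = h e + (sum h I - h i)"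
      using e i \<open>finite I\<close> by (simp add: sum_diff1)
    ultimately show "h e \<le> h i" by simp
  qed
qed

lemma reweighting_le:
  fixes k n a d SI SD SA \<kappa> :: real
  assumes "0 \<le> k" "0 \<le> a" "a \<le> n" "SI \<le> k * \<kappa>" "SA \<le> a * \<kappa>"
    and "(k + n) * SD \<le> d * (SI + n * \<kappa>)"
  shows "(k + n) * (SI + SD + SA) \<le> (k + d + a) * (SI + n * \<kappa>)"
proof -
  have "(n - a) * SI \<le> (n - a) * (k * \<kappa>)" using assms by (intro mult_left_mono) auto
  moreover have "(k + n) * SA \<le> (k + n) * (a * \<kappa>)" using assms by (intro mult_left_mono) auto
  ultimately show ?thesis using assms(6) by (simp add: algebra_simps)
qed

lemma perturbed_sum_le:
  fixes g :: "'a \<Rightarrow> real" and xs :: "'a list"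
  assumes g_le: "\<And>z. g z \<le> \<kappa>"
    and top_le: "\<And>I. I \<subseteq> {..<length xs} \<Longrightarrow> card I = length xs - n
      \<Longrightarrow> (\<Sum>i\<in>I. g (xs ! i)) \<le> T"
    and R: "R \<subseteq># mset xs" "size R \<le> n" and A: "size A \<le> n" and n: "n \<le> length xs"
  shows "real (length xs) * sum_mset (image_mset g (mset xs - R + A))
    \<le> real (size (mset xs - R + A)) * (T + real n * \<kappa>)"
proof -
  define b k where "b = length xs" and "k = length xs - n"
  obtain J where J: "J \<subseteq> {..<b}" "mset xs - R = image_mset ((!) xs) (mset_set J)"
    using subseteq_mset_as_image_nth[of "mset xs - R" xs] unfolding b_def by auto
  have card_J: "card J = b - size R"
    using arg_cong[OF J(2), of size] size_Diff_submset[OF R(1)] unfolding b_def by simp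
  have "finite J" using J(1) finite_subset by blast
  moreover have "k \<le> card J" using card_J R(2) unfolding k_def b_def by simp
  ultimately obtain I where I: "I \<subseteq> J" "card I = k"
    and dominated: "\<And>e i. e \<in> J - I \<Longrightarrow> i \<in> I \<Longrightarrow> g (xs ! e) \<le> g (xs ! i)"
    by (rule exists_subset_dominating_complement[where h = "\<lambda>i. g (xs ! i)"]) blast
  define SI SD SA where "SI = (\<Sum>i\<in>I. g (xs ! i))" and "SD = (\<Sum>i\<in>J - I. g (xs ! i))"
    and "SA = sum_mset (image_mset g A)"
  have sum_eq: "sum_mset (image_mset g (mset xs - R + A)) = SI + SD + SA"
    using J(2) sum.subset_diff[OF I(1) \<open>finite J\<close>, of "\<lambda>i. g (xs ! i)"]
    by (simp add: SI_def SD_def SA_def sum_unfold_sum_mset multiset.map_comp comp_def)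
  have size_eq: "size (mset xs - R + A) = k + (n - size R) + size A"
    using size_Diff_submset[OF R(1)] R(2) n unfolding k_def by simp
  have "SI \<le> T" unfolding SI_def using I J(1) by (intro top_le) (auto simp: k_def b_def)
  have SI_le: "SI \<le> real k * \<kappa>"
    unfolding SI_def using sum_bounded_above[of I "\<lambda>i. g (xs ! i)" \<kappa>] g_le I(2) by simp
  have "real b * g (xs ! e) \<le> SI + real n * \<kappa>" if "e \<in> J - I" for e
  proof -
    have "real k * g (xs ! e) \<le> SI"
      unfolding SI_def using sum_bounded_below[of I "g (xs ! e)"] dominated[OF that] I(2) by simp
    moreover have "real n * g (xs ! e) \<le> real n * \<kappa>" using g_le by (simp add: mult_left_mono)
    ultimately show ?thesis using n unfolding b_def k_def by (simp add: algebra_simps)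
  qed
  then have "real b * SD \<le> real (card (J - I)) * (SI + real n * \<kappa>)"
    unfolding SD_def sum_distrib_left by (rule sum_bounded_above)
  moreover have "card (J - I) = n - size R"
    using card_Diff_subset[OF finite_subset[OF I(1) \<open>finite J\<close>] I(1)] card_J I(2) n
    unfolding k_def b_def by simp
  ultimately have SD_le: "(real k + real n) * SD \<le> real (n - size R) * (SI + real n * \<kappa>)"
    using n unfolding b_def k_def by simp
  have SA_le: "SA \<le> real (size A) * \<kappa>"
    unfolding SA_def using sum_mset_mono[of A g "\<lambda>_. \<kappa>"] g_le by simp
  have "(real k + real n) * (SI + SD + SA)
      \<le> (real k + real (n - size R) + real (size A)) * (SI + real n * \<kappa>)"
    using A SI_le SA_le SD_le by (intro reweighting_le) auto
  also have "\<dots> \<le> (real k + real (n - size R) + real (size A)) * (T + real n * \<kappa>)"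
    using \<open>SI \<le> T\<close> by (intro mult_left_mono) auto
  finally have le: "(real k + real n) * (SI + SD + SA)
      \<le> (real k + real (n - size R) + real (size A)) * (T + real n * \<kappa>)" .
  have b_eq: "real k + real n = real (length xs)" using n unfolding k_def by simp
  have m_eq: "real k + real (n - size R) + real (size A) = real (size (mset xs - R + A))"
    unfolding size_eq by simp
  show ?thesis using le unfolding sum_eq b_eq m_eq .
qed

lemma perturbed_mean_le:
  fixes g :: "'a \<Rightarrow> real" and xs :: "'a list"
  assumes "0 \<le> \<kappa>" "\<And>z. g z \<le> \<kappa>"
    and top_le: "\<And>I. I \<subseteq> {..<length xs} \<Longrightarrow> card I = length xs - n
      \<Longrightarrow> (\<Sum>i\<in>I. g (xs ! i)) \<le> T"
    and R: "R \<subseteq># mset xs" "size R \<le> n" and A: "size A \<le> n" and n: "n \<le> length xs"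
  shows "sum_mset (image_mset g (mset xs - R + A)) / real (size (mset xs - R + A))
    \<le> (T + real n * \<kappa>) / real (length xs)"
proof (cases "size (mset xs - R + A) = 0")
  case True
  \<comment> \<open>the mean is 0 / 0 = 0; all points were removed, so n = length xs and T bounds the empty sum\<close>
  then have "n = length xs" using size_Diff_submset[OF R(1)] R(2) n by simp
  then have "0 \<le> T" using top_le[of "{}"] by simp
  then show ?thesis using True \<open>0 \<le> \<kappa>\<close> by simp
next
  case False
  have "size (mset xs - R + A) = length xs - size R + size A"
    using size_Diff_submset[OF R(1)] by simp
  then have pos: "0 < size (mset xs - R + A)" "0 < length xs" using False R(2) A n by linarith+
  have frac_le: "S / m \<le> X / b" if "0 < m" "0 < b" "b * S \<le> m * X" for S X m b :: real
    using that by (simp add: field_simps)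
  show ?thesis
    by (rule frac_le[OF _ _ perturbed_sum_le[OF assms(2-)]])
      (use pos in \<open>simp_all only: of_nat_0_less_iff\<close>)
qed

lemma perturbed_mean_ge:
  fixes g :: "'a \<Rightarrow> real" and xs :: "'a list"
  assumes "0 \<le> \<kappa>" "\<And>z. - \<kappa> \<le> g z"
    and bottom_ge: "\<And>I. I \<subseteq> {..<length xs} \<Longrightarrow> card I = length xs - n
      \<Longrightarrow> T \<le> (\<Sum>i\<in>I. g (xs ! i))"
    and "R \<subseteq># mset xs" "size R \<le> n" "size A \<le> n" "n \<le> length xs"
  shows "(T - real n * \<kappa>) / real (length xs)
    \<le> sum_mset (image_mset g (mset xs - R + A)) / real (size (mset xs - R + A))"
proof -
  have sum_mset_neg: "sum_mset (image_mset (\<lambda>z. - g z) N) = - sum_mset (image_mset g N)" for N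
    by (induction N) auto
  have "sum_mset (image_mset (\<lambda>z. - g z) (mset xs - R + A)) / real (size (mset xs - R + A))
      \<le> (- T + real n * \<kappa>) / real (length xs)"
  proof (rule perturbed_mean_le)
    show "- g z \<le> \<kappa>" for z using assms(2)[of z] by linarith
    show "(\<Sum>i\<in>I. - g (xs ! i)) \<le> - T"
      if "I \<subseteq> {..<length xs}" "card I = length xs - n" for I
      using bottom_ge[OF that] by (simp add: sum_negf)
  qed (use assms in auto)
  then have "- (sum_mset (image_mset g (mset xs - R + A)) / real (size (mset xs - R + A)))
      \<le> - ((T - real n * \<kappa>) / real (length xs))"
    by (simp only: sum_mset_neg minus_divide_left minus_diff_eq uminus_add_conv_diff)
  then show ?thesis by linarith
qed

lemma abs_Clip_component_le: "0 \<le> \<kappa> \<Longrightarrow> \<bar>Clip \<kappa> v $ j\<bar> \<le> \<kappa>"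
  unfolding Clip_def by auto

lemma sum_mset_component: "sum_mset M $ j = sum_mset (image_mset (\<lambda>v. v $ j) M)"
  by (induction M) auto

lemma perturbed_mean_bounds:
  fixes G :: "'a \<Rightarrow> real^'d" and xs :: "'a list" and \<delta>L \<delta>U :: "nat \<Rightarrow> real^'d"
  assumes "\<And>z j. \<bar>G z $ j\<bar> \<le> \<kappa>"
    and "\<And>i j. i < length xs \<Longrightarrow> \<delta>L i $ j \<le> G (xs ! i) $ j \<and> G (xs ! i) $ j \<le> \<delta>U i $ j"
    and "R \<subseteq># mset xs" "size R \<le> n" "size A \<le> n" "n \<le> length xs"
  shows "\<forall>j. ((1 / real (length xs)) *\<^sub>R
              (SEMin (length xs - n) (length xs) \<delta>L - (real n * \<kappa>) *\<^sub>R (\<chi> j. 1))) $ j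
            \<le> ((1 / real (size (mset xs - R + A))) *\<^sub>R sum_mset (image_mset G (mset xs - R + A))) $ j
          \<and> ((1 / real (size (mset xs - R + A))) *\<^sub>R sum_mset (image_mset G (mset xs - R + A))) $ j
            \<le> ((1 / real (length xs)) *\<^sub>R
              (SEMax (length xs - n) (length xs) \<delta>U + (real n * \<kappa>) *\<^sub>R (\<chi> j. 1))) $ j"
proof -
  have "0 \<le> \<kappa>" using assms(1)[of undefined undefined] by linarith
  have low_i: "\<delta>L i $ j \<le> G (xs ! i) $ j" and up_i: "G (xs ! i) $ j \<le> \<delta>U i $ j"
    if "i \<in> {..<length xs}" for i j
    using assms(2) that by auto
  have lower: "(SEMin (length xs - n) (length xs) \<delta>L $ j - real n * \<kappa>) / real (length xs)
      \<le> sum_mset (image_mset (\<lambda>z. G z $ j) (mset xs - R + A)) / real (size (mset xs - R + A))"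
    for j
  proof (rule perturbed_mean_ge)
    show "- \<kappa> \<le> G z $ j" for z using assms(1)[of z j] by linarith
    show "SEMin (length xs - n) (length xs) \<delta>L $ j \<le> (\<Sum>i\<in>I. G (xs ! i) $ j)"
      if "I \<subseteq> {..<length xs}" "card I = length xs - n" for I
    proof -
      have "SEMin (length xs - n) (length xs) \<delta>L $ j \<le> (\<Sum>i\<in>I. \<delta>L i $ j)"
        by (rule SEMin_le_sum[OF that])
      also have "\<dots> \<le> (\<Sum>i\<in>I. G (xs ! i) $ j)"
        by (rule sum_mono) (use low_i that(1) in blast)
      finally show ?thesis .
    qed
  qed (use assms \<open>0 \<le> \<kappa>\<close> in auto)
  have upper: "sum_mset (image_mset (\<lambda>z. G z $ j) (mset xs - R + A)) / real (size (mset xs - R + A))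
      \<le> (SEMax (length xs - n) (length xs) \<delta>U $ j + real n * \<kappa>) / real (length xs)"
    for j
  proof (rule perturbed_mean_le)
    show "G z $ j \<le> \<kappa>" for z using assms(1)[of z j] by linarith
    show "(\<Sum>i\<in>I. G (xs ! i) $ j) \<le> SEMax (length xs - n) (length xs) \<delta>U $ j"
      if "I \<subseteq> {..<length xs}" "card I = length xs - n" for I
    proof -
      have "(\<Sum>i\<in>I. G (xs ! i) $ j) \<le> (\<Sum>i\<in>I. \<delta>U i $ j)"
        by (rule sum_mono) (use up_i that(1) in blast)
      also have "\<dots> \<le> SEMax (length xs - n) (length xs) \<delta>U $ j"
        by (rule sum_le_SEMax[OF that])
      finally show ?thesis .
    qed
  qed (use assms \<open>0 \<le> \<kappa>\<close> in auto)
  show ?thesis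
    using lower upper by (simp add: sum_mset_component multiset.map_comp comp_def)
qed

theorem mainTheorem2:
  fixes f :: "'x \<Rightarrow> real^'d \<Rightarrow> real^'k"
    and L :: "real^'k \<Rightarrow> 'y \<Rightarrow> real"
    and \<kappa> :: real
    and thL thU :: "real^'d"
    and batch :: "('x \<times> 'y) list"
    and n :: nat
    and \<delta>L \<delta>U :: "nat \<Rightarrow> real^'d"
    and th :: "real^'d"
    and R A :: "('x \<times> 'y) multiset"
  assumes f_diff: "\<And>x \<theta>. f x differentiable (at \<theta>)"
    and L_diff: "\<And>y p. (\<lambda>q. L q y) differentiable (at p)"
    and kpos: "\<kappa> > 0"
    and n_le: "n \<le> length batch"
    and bounds: "\<And>i \<theta>'. i < length batch \<Longrightarrow> \<theta>' \<in> interval_dom thL thU \<Longrightarrow>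
        (\<forall>j. \<delta>L i $ j \<le> Clip \<kappa> (grad (\<lambda>\<theta>. L (f (fst (batch!i)) \<theta>) (snd (batch!i))) \<theta>') $ j
           \<and> Clip \<kappa> (grad (\<lambda>\<theta>. L (f (fst (batch!i)) \<theta>) (snd (batch!i))) \<theta>') $ j \<le> \<delta>U i $ j)"
    and th_in: "th \<in> interval_dom thL thU"
    and R_sub: "R \<subseteq># mset batch" and R_size: "size R \<le> n"
    and A_size: "size A \<le> n"
  shows "let b = length batch;
             Bt = mset batch - R + A;
             \<Delta> = (1 / real (size Bt)) *\<^sub>R
                   sum_mset (image_mset (\<lambda>(x, y). Clip \<kappa> (grad (\<lambda>\<theta>. L (f x \<theta>) y) th)) Bt);
             \<Delta>L = (1 / real b) *\<^sub>R (SEMin (b - n) b \<delta>L - (real n * \<kappa>) *\<^sub>R (\<chi> j. 1));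
             \<Delta>U = (1 / real b) *\<^sub>R (SEMax (b - n) b \<delta>U + (real n * \<kappa>) *\<^sub>R (\<chi> j. 1))
         in \<forall>j. \<Delta>L $ j \<le> \<Delta> $ j \<and> \<Delta> $ j \<le> \<Delta>U $ j"
proof -
  have "0 \<le> \<kappa>" using kpos by simp
  let ?G = "\<lambda>(x, y). Clip \<kappa> (grad (\<lambda>\<theta>. L (f x \<theta>) y) th)"
  have "\<bar>?G z $ j\<bar> \<le> \<kappa>" for z j
    using abs_Clip_component_le[OF \<open>0 \<le> \<kappa>\<close>] by (simp add: case_prod_beta)
  moreover have "\<delta>L i $ j \<le> ?G (batch ! i) $ j \<and> ?G (batch ! i) $ j \<le> \<delta>U i $ j"
    if "i < length batch" for i j
    using bounds[OF that th_in] by (simp add: case_prod_beta)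
  ultimately show ?thesis
    unfolding Let_def by (rule perturbed_mean_bounds[OF _ _ R_sub R_size A_size n_le])
qed

end
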